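(* Let $G$ be a nilpotent group of class $c$ and of odd order, and let $n=\lceil c/2\rceil$. Then for every $x\in\gamma_n(G)$ and $g\in G$, the order of the element $x\otimes g\in G\otimes G$ divides $\exp(\gamma_n(G))$.
   Context: $\gamma_n(G)$ is the $n$-th term of the lower central series. Conventions: ${}^g h = ghg^{-1}$. The nonabelian tensor square $G\otimes G$ is generated by symbols $g\otimes h$ subject to $gg'\otimes h=({}^g g'\otimes {}^g h)(g\otimes h)$ and $g\otimes hh'=(g\otimes h)({}^h g\otimes {}^h h')$. *)

theory Defs
  imports "HOL-Algebra.Algebra"
begin

text \<open>Conjugation convention: conj g h = g h g^-1.  Commutator [a,b] = a b a^-1 b^-1.\<close>

definition conjg :: "('a, 'b) monoid_scheme \<Rightarrow> 'a \<Rightarrow> 'a \<Rightarrow> 'a" where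
  "conjg G g h = g \<otimes>\<^bsub>G\<^esub> h \<otimes>\<^bsub>G\<^esub> inv\<^bsub>G\<^esub> g"

definition commutator_subgroup :: "('a, 'b) monoid_scheme \<Rightarrow> 'a set \<Rightarrow> 'a set \<Rightarrow> 'a set" where
  "commutator_subgroup G H K =
     generate G (\<Union>h \<in> H. \<Union>k \<in> K. {h \<otimes>\<^bsub>G\<^esub> k \<otimes>\<^bsub>G\<^esub> inv\<^bsub>G\<^esub> h \<otimes>\<^bsub>G\<^esub> inv\<^bsub>G\<^esub> k})"

text \<open>Lower central series, indexed as in the paper: gamma G 1 = G, gamma G (i+1) = [gamma G i, G].
  (gamma G 0 is also set to G, as a harmless convention.)\<close>

fun lower_central :: "('a, 'b) monoid_scheme \<Rightarrow> nat \<Rightarrow> 'a set" where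
  "lower_central G 0 = carrier G"
| "lower_central G (Suc 0) = carrier G"
| "lower_central G (Suc (Suc i)) = commutator_subgroup G (lower_central G (Suc i)) (carrier G)"

definition nilpotent :: "('a, 'b) monoid_scheme \<Rightarrow> bool" where
  "nilpotent G \<longleftrightarrow> group G \<and> (\<exists>c. lower_central G (Suc c) = {\<one>\<^bsub>G\<^esub>})"

definition nilpotency_class :: "('a, 'b) monoid_scheme \<Rightarrow> nat" where
  "nilpotency_class G = (LEAST c. lower_central G (Suc c) = {\<one>\<^bsub>G\<^esub>})"

definition exponent_of :: "('a, 'b) monoid_scheme \<Rightarrow> 'a set \<Rightarrow> nat" where
  "exponent_of G H = Lcm (group.ord G ` H)"

text \<open>Words in the free group on symbols g \<otimes> h (g, h in G): a letter ((g,h),True) stands for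
  g \<otimes> h, a letter ((g,h),False) for its inverse.\<close>

type_synonym 'a tword = "(('a \<times> 'a) \<times> bool) list"

definition twords :: "('a, 'b) monoid_scheme \<Rightarrow> 'a tword set" where
  "twords G = {w. \<forall>l \<in> set w. fst l \<in> carrier G \<times> carrier G}"

text \<open>The congruence on words generated by free cancellation and the two defining relations
  gg' \<otimes> h = (gg'g^-1 \<otimes> ghg^-1)(g \<otimes> h) and g \<otimes> hh' = (g \<otimes> h)(hgh^-1 \<otimes> hh'h^-1).\<close>

inductive_set teq :: "('a, 'b) monoid_scheme \<Rightarrow> ('a tword \<times> 'a tword) set"
  for G where
    teq_refl: "w \<in> twords G \<Longrightarrow> (w, w) \<in> teq G"
  | teq_sym: "(u, v) \<in> teq G \<Longrightarrow> (v, u) \<in> teq G"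
  | teq_trans: "(u, v) \<in> teq G \<Longrightarrow> (v, w) \<in> teq G \<Longrightarrow> (u, w) \<in> teq G"
  | teq_cong: "(u, v) \<in> teq G \<Longrightarrow> a \<in> twords G \<Longrightarrow> b \<in> twords G \<Longrightarrow> (a @ u @ b, a @ v @ b) \<in> teq G"
  | teq_cancel: "g \<in> carrier G \<Longrightarrow> h \<in> carrier G \<Longrightarrow> ([((g, h), e), ((g, h), \<not> e)], []) \<in> teq G"
  | teq_rel1: "g \<in> carrier G \<Longrightarrow> g' \<in> carrier G \<Longrightarrow> h \<in> carrier G \<Longrightarrow>
      ([((g \<otimes>\<^bsub>G\<^esub> g', h), True)],
       [((conjg G g g', conjg G g h), True), ((g, h), True)]) \<in> teq G"
  | teq_rel2: "g \<in> carrier G \<Longrightarrow> h \<in> carrier G \<Longrightarrow> h' \<in> carrier G \<Longrightarrow>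
      ([((g, h \<otimes>\<^bsub>G\<^esub> h'), True)],
       [((g, h), True), ((conjg G h g, conjg G h h'), True)]) \<in> teq G"

definition tensor_square :: "('a, 'b) monoid_scheme \<Rightarrow> 'a tword set monoid" where
  "tensor_square G =
     \<lparr> carrier = twords G // teq G,
       monoid.mult = (\<lambda>A B. teq G `` {u @ v | u v. u \<in> A \<and> v \<in> B}),
       one = teq G `` {[]} \<rparr>"

definition tensor :: "('a, 'b) monoid_scheme \<Rightarrow> 'a \<Rightarrow> 'a \<Rightarrow> 'a tword set" where
  "tensor G g h = teq G `` {[((g, h), True)]}"

end

theory Submission
  imports Defs
begin

text \<open>
  The map (g, h) \<mapsto> g \<otimes> h satisfies the two defining relations, so it is a crossed
  pairing t. Expanding t (g g') (h h') in the two possible orders shows that t g h acts on the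
  values of t like conjugation by the commutator [g, h]. So if x commutes with k = [x, g], then
  z = t x k commutes with every value of t, and induction gives t (x^i) k = z^i and
  t (x^i) g = z^(i choose 2) (t x g)^i. For m = ord x odd, m divides (m choose 2), hence
  (t x g)^m = 1.

  It remains to see that x \<in> \<gamma>_n commutes with [x, g] \<in> \<gamma>_(n+1). If \<gamma>_(c+1) = 1, then
  \<gamma>_(c+1-k) \<subseteq> Z_k for the upper central series Z, and the Hall-Witt identity gives
  [\<gamma>_(i+1), Z_(j+i+1)] \<subseteq> Z_j. As c - n \<le> n, we get [x, [x, g]] \<in> [\<gamma>_n, Z_n] \<subseteq> Z_0 = 1.
\<close>

section \<open>Conjugation and commutators\<close>

lemma (in group) mult_inv_cancel_left [simp]:
  "x \<in> carrier G \<Longrightarrow> y \<in> carrier G \<Longrightarrow> x \<otimes> (inv x \<otimes> y) = y"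
  by (simp add: m_assoc [symmetric])

lemma (in group) inv_mult_cancel_left [simp]:
  "x \<in> carrier G \<Longrightarrow> y \<in> carrier G \<Longrightarrow> inv x \<otimes> (x \<otimes> y) = y"
  by (simp add: m_assoc [symmetric])

lemma (in group) conjg_closed [simp]:
  "g \<in> carrier G \<Longrightarrow> h \<in> carrier G \<Longrightarrow> conjg G g h \<in> carrier G"
  by (simp add: conjg_def)

lemma (in group) conjg_mult_right:
  "g \<in> carrier G \<Longrightarrow> a \<in> carrier G \<Longrightarrow> b \<in> carrier G \<Longrightarrow>
   conjg G g (a \<otimes> b) = conjg G g a \<otimes> conjg G g b"
  by (simp add: conjg_def m_assoc)

lemma (in group) conjg_conjg:
  "g \<in> carrier G \<Longrightarrow> h \<in> carrier G \<Longrightarrow> x \<in> carrier G \<Longrightarrow>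
   conjg G (conjg G g h) (conjg G g x) = conjg G (g \<otimes> h) x"
  by (simp add: conjg_def m_assoc inv_mult_group)

lemma (in group) conjg_commute:
  "g \<in> carrier G \<Longrightarrow> x \<in> carrier G \<Longrightarrow> g \<otimes> x = x \<otimes> g \<Longrightarrow> conjg G g x = x"
  by (simp add: conjg_def m_assoc)

lemma (in group) conjg_pow_self:
  "x \<in> carrier G \<Longrightarrow> conjg G x (x [^] (i::nat)) = x [^] i"
  by (simp add: conjg_commute group_commutes_pow)

definition commutator :: "('a, 'b) monoid_scheme \<Rightarrow> 'a \<Rightarrow> 'a \<Rightarrow> 'a" where
  "commutator G a b = a \<otimes>\<^bsub>G\<^esub> b \<otimes>\<^bsub>G\<^esub> inv\<^bsub>G\<^esub> a \<otimes>\<^bsub>G\<^esub> inv\<^bsub>G\<^esub> b"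

context group
begin

lemma commutator_closed [simp]:
  "a \<in> carrier G \<Longrightarrow> b \<in> carrier G \<Longrightarrow> commutator G a b \<in> carrier G"
  by (simp add: commutator_def)

lemma commutator_one_left [simp]: "a \<in> carrier G \<Longrightarrow> commutator G \<one> a = \<one>"
  by (simp add: commutator_def)

lemma commutator_eq_one_iff:
  assumes "a \<in> carrier G" and "b \<in> carrier G"
  shows "commutator G a b = \<one> \<longleftrightarrow> a \<otimes> b = b \<otimes> a"
proof -
  have eq: "commutator G a b = (a \<otimes> b) \<otimes> inv (b \<otimes> a)"
    using assms by (simp add: commutator_def m_assoc inv_mult_group)
  show ?thesis
  proof
    assume "commutator G a b = \<one>"
    then have "inv (inv (b \<otimes> a)) = a \<otimes> b"
      using eq assms by (intro inv_equality) auto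
    then show "a \<otimes> b = b \<otimes> a"
      using assms by simp
  next
    assume "a \<otimes> b = b \<otimes> a"
    then show "commutator G a b = \<one>"
      using eq assms by simp
  qed
qed

lemma inv_commutator:
  "a \<in> carrier G \<Longrightarrow> b \<in> carrier G \<Longrightarrow> inv (commutator G a b) = commutator G b a"
  by (simp add: commutator_def m_assoc inv_mult_group)

lemma commutator_mult_left:
  "a \<in> carrier G \<Longrightarrow> b \<in> carrier G \<Longrightarrow> g \<in> carrier G \<Longrightarrow>
   commutator G (a \<otimes> b) g = conjg G a (commutator G b g) \<otimes> commutator G a g"
  by (simp add: commutator_def conjg_def m_assoc inv_mult_group)

lemma commutator_inv_left:
  "a \<in> carrier G \<Longrightarrow> g \<in> carrier G \<Longrightarrow>
   commutator G (inv a) g = conjg G (inv a) (inv (commutator G a g))"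
  by (simp add: commutator_def conjg_def m_assoc inv_mult_group)

lemma commutator_conjg_left:
  "a \<in> carrier G \<Longrightarrow> h \<in> carrier G \<Longrightarrow> g \<in> carrier G \<Longrightarrow>
   commutator G (conjg G h a) g = conjg G h (commutator G a (inv h \<otimes> g \<otimes> h))"
  by (simp add: commutator_def conjg_def m_assoc inv_mult_group)

lemma hall_witt:
  "x \<in> carrier G \<Longrightarrow> y \<in> carrier G \<Longrightarrow> z \<in> carrier G \<Longrightarrow>
   conjg G (inv y) (commutator G (commutator G y (inv x)) (inv z))
   \<otimes> conjg G (inv z) (commutator G (commutator G z (inv y)) (inv x))
   \<otimes> conjg G (inv x) (commutator G (commutator G x (inv z)) (inv y)) = \<one>"
  by (simp add: commutator_def conjg_def m_assoc inv_mult_group)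

lemma normal_conjg_closed: "H \<lhd> G \<Longrightarrow> h \<in> H \<Longrightarrow> g \<in> carrier G \<Longrightarrow> conjg G g h \<in> H"
  by (simp add: conjg_def normal.inv_op_closed2)

end

section \<open>The tensor square is a group\<close>

lemma teq_twords:
  assumes "group G" and "(u, v) \<in> teq G"
  shows "u \<in> twords G \<and> v \<in> twords G"
  using assms(2)
  by induction (auto simp: twords_def group.conjg_closed[OF assms(1)]
      monoid.m_closed[OF group.is_monoid[OF assms(1)]])

lemma twords_append [simp]: "u @ v \<in> twords G \<longleftrightarrow> u \<in> twords G \<and> v \<in> twords G"
  by (auto simp: twords_def)

lemma twords_Nil [simp]: "[] \<in> twords G"
  by (simp add: twords_def)

lemma equiv_teq: "group G \<Longrightarrow> equiv (twords G) (teq G)"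
  unfolding equiv_def refl_on_def sym_def trans_def
  by (auto dest: teq_twords intro: teq_refl teq_sym teq_trans)

lemma teq_append:
  assumes "group G" and "(u, u') \<in> teq G" and "(v, v') \<in> teq G"
  shows "(u @ v, u' @ v') \<in> teq G"
proof -
  have "(u @ v, u' @ v) \<in> teq G"
    using teq_cong[OF assms(2), of "[]" v] teq_twords[OF assms(1,3)] by simp
  moreover have "(u' @ v, u' @ v') \<in> teq G"
    using teq_cong[OF assms(3), of u' "[]"] teq_twords[OF assms(1,2)] by simp
  ultimately show ?thesis
    by (rule teq_trans)
qed

lemma tensor_square_mult_classes:
  assumes "group G" and "u \<in> twords G" and "v \<in> twords G"
  shows "teq G `` {u} \<otimes>\<^bsub>tensor_square G\<^esub> teq G `` {v} = teq G `` {u @ v}"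
proof -
  let ?S = "{u' @ v' |u' v'. u' \<in> teq G `` {u} \<and> v' \<in> teq G `` {v}}"
  have "teq G `` {s} = teq G `` {u @ v}" if "s \<in> ?S" for s
    using that equiv_class_eq[OF equiv_teq[OF assms(1)]] teq_append[OF assms(1)] by blast
  moreover have "u @ v \<in> ?S"
    using assms(2,3) teq_refl by blast
  ultimately have "teq G `` ?S = teq G `` {u @ v}"
    by blast
  then show ?thesis
    by (simp add: tensor_square_def)
qed

definition tword_inv :: "'a tword \<Rightarrow> 'a tword" where
  "tword_inv w = rev (map (\<lambda>(p, e). (p, \<not> e)) w)"

lemma tword_inv_twords: "w \<in> twords G \<Longrightarrow> tword_inv w \<in> twords G"
  by (auto simp: twords_def tword_inv_def)

lemma tword_inv_tword_inv [simp]: "tword_inv (tword_inv w) = w"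
  by (induction w) (auto simp: tword_inv_def)

lemma teq_tword_inv_right: "w \<in> twords G \<Longrightarrow> (w @ tword_inv w, []) \<in> teq G"
proof (induction w)
  case Nil
  then show ?case
    by (simp add: tword_inv_def teq_refl)
next
  case (Cons l w)
  obtain g h e where l: "l = ((g, h), e)"
    by (metis prod.collapse)
  have gh: "g \<in> carrier G" "h \<in> carrier G" and w: "w \<in> twords G"
    using Cons.prems l by (auto simp: twords_def)
  have "([l] @ (w @ tword_inv w) @ [((g, h), \<not> e)], [l] @ [] @ [((g, h), \<not> e)]) \<in> teq G"
    using teq_cong[OF Cons.IH[OF w], of "[l]" "[((g, h), \<not> e)]"] gh l by (simp add: twords_def)
  moreover have "([l] @ [] @ [((g, h), \<not> e)], []) \<in> teq G"
    using teq_cancel[OF gh] l by simp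
  ultimately show ?case
    by (auto simp: tword_inv_def l intro: teq_trans)
qed

lemma tensor_square_group:
  assumes "group G"
  shows "group (tensor_square G)"
proof (rule groupI)
  let ?T = "tensor_square G"
  have carrier: "carrier ?T = twords G // teq G" and one: "\<one>\<^bsub>?T\<^esub> = teq G `` {[]}"
    by (simp_all add: tensor_square_def)
  note mult = tensor_square_mult_classes[OF assms]
  show "x \<otimes>\<^bsub>?T\<^esub> y \<in> carrier ?T" if "x \<in> carrier ?T" "y \<in> carrier ?T" for x y
    using that unfolding carrier by (auto elim!: quotientE simp: mult intro!: quotientI)
  show "\<one>\<^bsub>?T\<^esub> \<in> carrier ?T"
    unfolding carrier one by (auto intro!: quotientI)
  show "(x \<otimes>\<^bsub>?T\<^esub> y) \<otimes>\<^bsub>?T\<^esub> z = x \<otimes>\<^bsub>?T\<^esub> (y \<otimes>\<^bsub>?T\<^esub> z)"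
    if "x \<in> carrier ?T" "y \<in> carrier ?T" "z \<in> carrier ?T" for x y z
    using that unfolding carrier by (auto elim!: quotientE simp: mult)
  show "\<one>\<^bsub>?T\<^esub> \<otimes>\<^bsub>?T\<^esub> x = x" if "x \<in> carrier ?T" for x
    using that unfolding carrier one by (auto elim!: quotientE simp: mult)
  show "\<exists>y\<in>carrier ?T. y \<otimes>\<^bsub>?T\<^esub> x = \<one>\<^bsub>?T\<^esub>" if "x \<in> carrier ?T" for x
  proof -
    from that obtain w where w: "w \<in> twords G" "x = teq G `` {w}"
      unfolding carrier by (auto elim!: quotientE)
    have "(tword_inv w @ w, []) \<in> teq G"
      using teq_tword_inv_right[OF tword_inv_twords[OF w(1)]] by simp
    then have "teq G `` {tword_inv w} \<otimes>\<^bsub>?T\<^esub> x = \<one>\<^bsub>?T\<^esub>"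
      using w tword_inv_twords[OF w(1)] equiv_class_eq[OF equiv_teq[OF assms]]
      by (simp add: mult one)
    then show ?thesis
      using tword_inv_twords[OF w(1)] unfolding carrier by (blast intro: quotientI)
  qed
qed

section \<open>Crossed pairings\<close>

locale crossed_pairing = G: group G + T: group T
  for G :: "('a, 'b) monoid_scheme" (structure) and T :: "('c, 'd) monoid_scheme"
  and t :: "'a \<Rightarrow> 'a \<Rightarrow> 'c" +
  assumes pairing_closed [simp]: "g \<in> carrier G \<Longrightarrow> h \<in> carrier G \<Longrightarrow> t g h \<in> carrier T"
    and pairing_mult_left: "g \<in> carrier G \<Longrightarrow> g' \<in> carrier G \<Longrightarrow> h \<in> carrier G \<Longrightarrow>
      t (g \<otimes> g') h = t (conjg G g g') (conjg G g h) \<otimes>\<^bsub>T\<^esub> t g h"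
    and pairing_mult_right: "g \<in> carrier G \<Longrightarrow> h \<in> carrier G \<Longrightarrow> h' \<in> carrier G \<Longrightarrow>
      t g (h \<otimes> h') = t g h \<otimes>\<^bsub>T\<^esub> t (conjg G h g) (conjg G h h')"
begin

lemma pairing_one_left: "h \<in> carrier G \<Longrightarrow> t \<one> h = \<one>\<^bsub>T\<^esub>"
  using pairing_mult_left[of \<one> \<one> h] by (simp add: conjg_def)

lemma pairing_swap:
  assumes g: "g \<in> carrier G" and h: "h \<in> carrier G" and g': "g' \<in> carrier G" and h': "h' \<in> carrier G"
  shows "t (conjg G (g \<otimes> h) g') (conjg G (g \<otimes> h) h') \<otimes>\<^bsub>T\<^esub> t g h
       = t g h \<otimes>\<^bsub>T\<^esub> t (conjg G (h \<otimes> g) g') (conjg G (h \<otimes> g) h')"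
    (is "?B \<otimes>\<^bsub>T\<^esub> ?C = ?C \<otimes>\<^bsub>T\<^esub> ?E")
proof -
  note cl = g h g' h'
  let ?A = "t (conjg G g g') (conjg G g h)"
  let ?D = "t (conjg G h g) (conjg G h h')"
  have "t (g \<otimes> g') (h \<otimes> h') = t (conjg G g g') (conjg G g h \<otimes> conjg G g h') \<otimes>\<^bsub>T\<^esub> t g (h \<otimes> h')"
    using pairing_mult_left[of g g' "h \<otimes> h'"] cl by (simp add: G.conjg_mult_right)
  also have "t (conjg G g g') (conjg G g h \<otimes> conjg G g h') = ?A \<otimes>\<^bsub>T\<^esub> ?B"
    using pairing_mult_right cl by (simp add: G.conjg_conjg)
  also have "t g (h \<otimes> h') = ?C \<otimes>\<^bsub>T\<^esub> ?D"
    using pairing_mult_right cl by simp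
  finally have left_first: "t (g \<otimes> g') (h \<otimes> h') = ?A \<otimes>\<^bsub>T\<^esub> (?B \<otimes>\<^bsub>T\<^esub> ?C) \<otimes>\<^bsub>T\<^esub> ?D"
    using cl by (simp add: T.m_assoc)
  have "t (g \<otimes> g') (h \<otimes> h') = t (g \<otimes> g') h \<otimes>\<^bsub>T\<^esub> t (conjg G h g \<otimes> conjg G h g') (conjg G h h')"
    using pairing_mult_right[of "g \<otimes> g'" h h'] cl by (simp add: G.conjg_mult_right)
  also have "t (g \<otimes> g') h = ?A \<otimes>\<^bsub>T\<^esub> ?C"
    using pairing_mult_left cl by simp
  also have "t (conjg G h g \<otimes> conjg G h g') (conjg G h h') = ?E \<otimes>\<^bsub>T\<^esub> ?D"
    using pairing_mult_left cl by (simp add: G.conjg_conjg)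
  finally have right_first: "t (g \<otimes> g') (h \<otimes> h') = ?A \<otimes>\<^bsub>T\<^esub> (?C \<otimes>\<^bsub>T\<^esub> ?E) \<otimes>\<^bsub>T\<^esub> ?D"
    using cl by (simp add: T.m_assoc)
  show ?thesis
    using left_first right_first cl by simp
qed

lemma pairing_conjg_commutator:
  assumes g: "g \<in> carrier G" and h: "h \<in> carrier G" and p: "p \<in> carrier G" and q: "q \<in> carrier G"
  shows "t (conjg G (commutator G g h) p) (conjg G (commutator G g h) q) \<otimes>\<^bsub>T\<^esub> t g h
       = t g h \<otimes>\<^bsub>T\<^esub> t p q"
proof -
  define r where "r = inv (h \<otimes> g)"
  have r: "r \<in> carrier G"
    by (simp add: r_def g h)
  have "conjg G (g \<otimes> h) (conjg G r p) = conjg G (commutator G g h) p"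
    "conjg G (g \<otimes> h) (conjg G r q) = conjg G (commutator G g h) q"
    "conjg G (h \<otimes> g) (conjg G r p) = p" "conjg G (h \<otimes> g) (conjg G r q) = q"
    using g h p q by (simp_all add: r_def conjg_def commutator_def G.m_assoc G.inv_mult_group)
  then show ?thesis
    using pairing_swap[OF g h, of "conjg G r p" "conjg G r q"] g h p q r by simp
qed

lemma pairing_commute_of_commute:
  assumes "g \<in> carrier G" "h \<in> carrier G" "p \<in> carrier G" "q \<in> carrier G" and "g \<otimes> h = h \<otimes> g"
  shows "t p q \<otimes>\<^bsub>T\<^esub> t g h = t g h \<otimes>\<^bsub>T\<^esub> t p q"
proof -
  have "commutator G g h = \<one>"
    using assms by (simp add: commutator_def G.m_assoc)
  then show ?thesis
    using pairing_conjg_commutator[OF assms(1-4)] assms by (simp add: conjg_def)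
qed

lemma pairing_pow_left_of_commute:
  assumes x: "x \<in> carrier G" and k: "k \<in> carrier G" and xk: "x \<otimes> k = k \<otimes> x"
  shows "t (x [^] i) k = t x k [^]\<^bsub>T\<^esub> (i::nat)"
proof (induction i)
  case 0
  show ?case
    using k by (simp add: pairing_one_left)
next
  case (Suc i)
  have "t (x [^] Suc i) k = t (x \<otimes> x [^] i) k"
    by (simp only: G.nat_pow_Suc2[OF x])
  also have "\<dots> = t (x [^] i) k \<otimes>\<^bsub>T\<^esub> t x k"
    using pairing_mult_left[of x "x [^] i" k] x k xk by (simp add: G.conjg_pow_self G.conjg_commute)
  finally show ?case
    using Suc by simp
qed

context
  fixes x g
  assumes x: "x \<in> carrier G" and g: "g \<in> carrier G"
    and commute: "x \<otimes> commutator G x g = commutator G x g \<otimes> x"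
begin

lemma pairing_pow_Suc_left:
  "t (x [^] Suc i) g
   = t x (commutator G x g) [^]\<^bsub>T\<^esub> i \<otimes>\<^bsub>T\<^esub> t x g \<otimes>\<^bsub>T\<^esub> t (x [^] i) g"
proof -
  let ?k = "commutator G x g"
  have k: "?k \<in> carrier G"
    using x g by simp
  have "t (x [^] Suc i) g = t (x \<otimes> x [^] i) g"
    by (simp only: G.nat_pow_Suc2[OF x])
  also have "\<dots> = t (x [^] i) (conjg G x g) \<otimes>\<^bsub>T\<^esub> t x g"
    using pairing_mult_left[of x "x [^] i" g] x g by (simp add: G.conjg_pow_self)
  also have "conjg G x g = ?k \<otimes> g"
    using x g by (simp add: commutator_def conjg_def G.m_assoc)
  also have "t (x [^] i) (?k \<otimes> g)
      = t x ?k [^]\<^bsub>T\<^esub> i \<otimes>\<^bsub>T\<^esub> t (conjg G ?k (x [^] i)) (conjg G ?k g)"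
    using pairing_mult_right[of "x [^] i" ?k g] pairing_pow_left_of_commute[OF x k commute] x g
    by simp
  also have "\<dots> \<otimes>\<^bsub>T\<^esub> t x g
      = t x ?k [^]\<^bsub>T\<^esub> i \<otimes>\<^bsub>T\<^esub> (t (conjg G ?k (x [^] i)) (conjg G ?k g) \<otimes>\<^bsub>T\<^esub> t x g)"
    using x g k by (simp add: T.m_assoc)
  also have "t (conjg G ?k (x [^] i)) (conjg G ?k g) \<otimes>\<^bsub>T\<^esub> t x g = t x g \<otimes>\<^bsub>T\<^esub> t (x [^] i) g"
    using pairing_conjg_commutator[OF x g, of "x [^] i" g] x g by simp
  finally show ?thesis
    using x g k by (simp add: T.m_assoc)
qed

lemma pairing_pow_left:
  "t (x [^] i) g = t x (commutator G x g) [^]\<^bsub>T\<^esub> (i choose 2) \<otimes>\<^bsub>T\<^esub> t x g [^]\<^bsub>T\<^esub> i"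
proof (induction i)
  case 0
  show ?case
    using g by (simp add: pairing_one_left numeral_2_eq_2)
next
  case (Suc i)
  define z where "z = t x (commutator G x g)"
  define y where "y = t x g"
  have z: "z \<in> carrier T" and y: "y \<in> carrier T"
    using x g by (simp_all add: z_def y_def)
  have "y \<otimes>\<^bsub>T\<^esub> z = z \<otimes>\<^bsub>T\<^esub> y"
    using pairing_commute_of_commute[OF x _ x g commute] x g by (simp add: y_def z_def)
  then have yz: "y \<otimes>\<^bsub>T\<^esub> z [^]\<^bsub>T\<^esub> n = z [^]\<^bsub>T\<^esub> n \<otimes>\<^bsub>T\<^esub> y" for n :: nat
    using T.group_commutes_pow[of z y n] y z by simp
  have "t (x [^] Suc i) g = z [^]\<^bsub>T\<^esub> i \<otimes>\<^bsub>T\<^esub> y \<otimes>\<^bsub>T\<^esub> (z [^]\<^bsub>T\<^esub> (i choose 2) \<otimes>\<^bsub>T\<^esub> y [^]\<^bsub>T\<^esub> i)"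
    using pairing_pow_Suc_left Suc by (simp add: y_def z_def)
  also have "\<dots> = z [^]\<^bsub>T\<^esub> i \<otimes>\<^bsub>T\<^esub> z [^]\<^bsub>T\<^esub> (i choose 2) \<otimes>\<^bsub>T\<^esub> (y \<otimes>\<^bsub>T\<^esub> y [^]\<^bsub>T\<^esub> i)"
    using y z by (simp add: T.m_assoc yz flip: T.m_assoc[of y])
  also have "\<dots> = z [^]\<^bsub>T\<^esub> (Suc i choose 2) \<otimes>\<^bsub>T\<^esub> y [^]\<^bsub>T\<^esub> Suc i"
    using y z by (simp add: T.nat_pow_mult numeral_2_eq_2 add.commute T.nat_pow_Suc2[symmetric] del: T.nat_pow_Suc)
  finally show ?case
    by (simp add: y_def z_def)
qed

lemma ord_pairing_dvd:
  assumes "odd (G.ord x)"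
  shows "T.ord (t x g) dvd G.ord x"
proof -
  let ?m = "G.ord x"
  obtain r where "?m = 2 * r + 1"
    using assms by (blast elim: oddE)
  then have r: "?m choose 2 = ?m * r"
    by (simp add: choose_two algebra_simps)
  have "t x (commutator G x g) [^]\<^bsub>T\<^esub> ?m = \<one>\<^bsub>T\<^esub>"
    using pairing_pow_left_of_commute[OF x _ commute, of ?m] x g by (simp add: pairing_one_left)
  then have "t x (commutator G x g) [^]\<^bsub>T\<^esub> (?m choose 2) = \<one>\<^bsub>T\<^esub>"
    using x g by (simp add: r T.nat_pow_pow [symmetric])
  then have "t x g [^]\<^bsub>T\<^esub> ?m = \<one>\<^bsub>T\<^esub>"
    using pairing_pow_left[of ?m] x g by (simp add: pairing_one_left)
  then show ?thesis
    using x g by (simp add: T.pow_eq_id)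
qed

end

end

lemma tensor_crossed_pairing:
  assumes "group G"
  shows "crossed_pairing G (tensor_square G) (tensor G)"
proof -
  interpret G: group G by fact
  have tw: "[((a, b), True)] \<in> twords G" if "a \<in> carrier G" "b \<in> carrier G" for a b
    using that by (simp add: twords_def)
  have mult: "tensor G a b \<otimes>\<^bsub>tensor_square G\<^esub> tensor G c d = teq G `` {[((a, b), True), ((c, d), True)]}"
    if "a \<in> carrier G" "b \<in> carrier G" "c \<in> carrier G" "d \<in> carrier G" for a b c d
    using tensor_square_mult_classes[OF assms tw[of a b] tw[of c d]] that by (simp add: tensor_def)
  have class_eq: "teq G `` {u} = teq G `` {v}" if "(u, v) \<in> teq G" for u v
    using equiv_class_eq[OF equiv_teq[OF assms] that] .
  show ?thesis
  proof (intro crossed_pairing.intro crossed_pairing_axioms.intro assms tensor_square_group)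
    show "tensor G g h \<in> carrier (tensor_square G)" if "g \<in> carrier G" "h \<in> carrier G" for g h
      using tw[OF that] by (auto simp: tensor_def tensor_square_def intro: quotientI)
    show "tensor G (g \<otimes>\<^bsub>G\<^esub> g') h
        = tensor G (conjg G g g') (conjg G g h) \<otimes>\<^bsub>tensor_square G\<^esub> tensor G g h"
      if "g \<in> carrier G" "g' \<in> carrier G" "h \<in> carrier G" for g g' h
      using mult class_eq[OF teq_rel1[OF that]] that by (simp add: tensor_def)
    show "tensor G g (h \<otimes>\<^bsub>G\<^esub> h')
        = tensor G g h \<otimes>\<^bsub>tensor_square G\<^esub> tensor G (conjg G h g) (conjg G h h')"
      if "g \<in> carrier G" "h \<in> carrier G" "h' \<in> carrier G" for g h h'
      using mult class_eq[OF teq_rel2[OF that]] that by (simp add: tensor_def)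
  qed
qed

section \<open>Central series\<close>

fun upper_central :: "('a, 'b) monoid_scheme \<Rightarrow> nat \<Rightarrow> 'a set" where
  "upper_central G 0 = {\<one>\<^bsub>G\<^esub>}"
| "upper_central G (Suc k) =
     {z \<in> carrier G. \<forall>g \<in> carrier G. commutator G z g \<in> upper_central G k}"

context group
begin

lemma upper_central_normal: "upper_central G k \<lhd> G"
proof (induction k)
  case 0
  show ?case
    by (simp add: normal_inv_iff triv_subgroup)
next
  case (Suc k)
  let ?Z = "upper_central G k" and ?Z' = "upper_central G (Suc k)"
  interpret Z: subgroup ?Z G
    using Suc normal_imp_subgroup by blast
  note Z' = upper_central.simps(2)[of G k]
  have "subgroup ?Z' G"
  proof (rule subgroupI)
    show "?Z' \<subseteq> carrier G" and "?Z' \<noteq> {}"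
      by auto
    show "inv a \<in> ?Z'" if "a \<in> ?Z'" for a
      using that unfolding Z' by (simp add: commutator_inv_left normal_conjg_closed[OF Suc])
    show "a \<otimes> b \<in> ?Z'" if "a \<in> ?Z'" "b \<in> ?Z'" for a b
      using that unfolding Z' by (simp add: commutator_mult_left normal_conjg_closed[OF Suc])
  qed
  moreover have "conjg G h a \<in> ?Z'" if "a \<in> ?Z'" "h \<in> carrier G" for a h
    using that unfolding Z' by (simp add: commutator_conjg_left normal_conjg_closed[OF Suc])
  ultimately show ?case
    by (simp add: normal_inv_iff conjg_def del: upper_central.simps)
qed

lemma upper_central_subgroup: "subgroup (upper_central G k) G"
  using upper_central_normal normal_imp_subgroup by blast

lemma upper_central_mem_carrier: "z \<in> upper_central G k \<Longrightarrow> z \<in> carrier G"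
  using subgroup.mem_carrier[OF upper_central_subgroup] .

lemma upper_central_mult:
  "a \<in> upper_central G k \<Longrightarrow> b \<in> upper_central G k \<Longrightarrow> a \<otimes> b \<in> upper_central G k"
  using subgroup.m_closed[OF upper_central_subgroup] .

lemma upper_central_inv: "a \<in> upper_central G k \<Longrightarrow> inv a \<in> upper_central G k"
  using subgroup.m_inv_closed[OF upper_central_subgroup] .

lemma upper_central_conjg:
  "a \<in> upper_central G k \<Longrightarrow> h \<in> carrier G \<Longrightarrow> conjg G h a \<in> upper_central G k"
  using normal_conjg_closed[OF upper_central_normal] .

lemma upper_central_subset_Suc: "upper_central G k \<subseteq> upper_central G (Suc k)"
  by (induction k) auto

lemma upper_central_mono: "k \<le> l \<Longrightarrow> upper_central G k \<subseteq> upper_central G l"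
  by (induction l rule: dec_induct) (use upper_central_subset_Suc in blast)+

lemma lower_central_subgroup: "subgroup (lower_central G i) G"
proof -
  have "subgroup (lower_central G (Suc i)) G" for i
  proof (induction i)
    case 0
    show ?case
      by (simp add: subgroup_self)
  next
    case (Suc i)
    then have "lower_central G (Suc i) \<subseteq> carrier G"
      by (rule subgroup.subset)
    then show ?case
      by (auto simp: commutator_subgroup_def intro!: generate_is_subgroup)
  qed
  then show ?thesis
    by (cases i) (simp_all add: subgroup_self)
qed

lemma lower_central_mem_carrier: "a \<in> lower_central G i \<Longrightarrow> a \<in> carrier G"
  using subgroup.mem_carrier[OF lower_central_subgroup] .

lemma commutator_in_lower_central:
  "a \<in> lower_central G (Suc i) \<Longrightarrow> g \<in> carrier G \<Longrightarrow>
   commutator G a g \<in> lower_central G (Suc (Suc i))"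
  unfolding lower_central.simps commutator_subgroup_def commutator_def
  by (rule generate.incl) blast

lemma lower_central_subset_upper_central:
  assumes "lower_central G (Suc c) = {\<one>}" and "k \<le> c"
  shows "lower_central G (Suc (c - k)) \<subseteq> upper_central G k"
  using assms(2)
proof (induction k)
  case 0
  then show ?case
    using assms(1) by simp
next
  case (Suc k)
  then obtain j where j: "c - k = Suc j" "c - Suc k = j"
    by (metis Suc_diff_Suc Suc_le_lessD diff_Suc_1)
  have "a \<in> upper_central G (Suc k)" if "a \<in> lower_central G (Suc j)" for a
    using that Suc commutator_in_lower_central[OF that] lower_central_mem_carrier j by auto
  then show ?case
    using j by auto
qed

lemma commutator_left_subgroup:
  "subgroup {a \<in> carrier G. \<forall>z \<in> upper_central G l. commutator G a z \<in> upper_central G j} G"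
proof (rule subgroupI)
  let ?S = "{a \<in> carrier G. \<forall>z \<in> upper_central G l. commutator G a z \<in> upper_central G j}"
  show "?S \<subseteq> carrier G"
    by blast
  have "commutator G \<one> z = \<one>" if "z \<in> upper_central G l" for z
    using that by (simp add: upper_central_mem_carrier)
  then have "\<one> \<in> ?S"
    using subgroup.one_closed[OF upper_central_subgroup] by auto
  then show "?S \<noteq> {}"
    by blast
  show "inv a \<in> ?S" if "a \<in> ?S" for a
    using that
    by (auto simp: commutator_inv_left upper_central_mem_carrier intro!: upper_central_conjg upper_central_inv)
  show "a \<otimes> b \<in> ?S" if "a \<in> ?S" "b \<in> ?S" for a b
    using that
    by (auto simp: commutator_mult_left upper_central_mem_carrier intro!: upper_central_conjg upper_central_mult)
qed

lemma commutator_commutator_upper_central: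
  assumes a: "a \<in> carrier G" and g: "g \<in> carrier G" and z: "z \<in> upper_central G (Suc (j + s))"
    and inv_a: "\<And>l w. w \<in> upper_central G (l + s) \<Longrightarrow> commutator G (inv a) w \<in> upper_central G l"
  shows "commutator G (commutator G a g) z \<in> upper_central G j"
proof -
  have zc: "z \<in> carrier G"
    using z by (rule upper_central_mem_carrier)
  have "inv z \<in> upper_central G (Suc j + s)"
    using upper_central_inv[OF z] by simp
  then have "inv (commutator G (inv a) (inv z)) \<in> upper_central G (Suc j)"
    using inv_a upper_central_inv by blast
  then have T2: "conjg G z (commutator G (commutator G (inv z) (inv a)) g) \<in> upper_central G j"
    using a g zc by (auto simp: inv_commutator intro: upper_central_conjg)
  have "inv (commutator G z (inv g)) \<in> upper_central G (j + s)"
    using z g by (auto intro: upper_central_inv)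
  then have "inv (commutator G (inv a) (commutator G (inv g) z)) \<in> upper_central G j"
    using g zc by (auto simp: inv_commutator intro: inv_a upper_central_inv)
  then have T3: "conjg G g (commutator G (commutator G (inv g) z) (inv a)) \<in> upper_central G j"
    using a g zc by (auto simp: inv_commutator intro: upper_central_conjg)
  define T1 where "T1 = conjg G (inv a) (commutator G (commutator G a g) z)"
  have "T1 \<otimes> (conjg G z (commutator G (commutator G (inv z) (inv a)) g)
      \<otimes> conjg G g (commutator G (commutator G (inv g) z) (inv a))) = \<one>"
    using hall_witt[of "inv g" a "inv z"] a g zc by (simp add: T1_def m_assoc)
  then have "T1 = inv (conjg G z (commutator G (commutator G (inv z) (inv a)) g)
      \<otimes> conjg G g (commutator G (commutator G (inv g) z) (inv a)))"
    using a g zc by (simp add: T1_def inv_equality)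
  then have "T1 \<in> upper_central G j"
    using T2 T3 by (simp add: upper_central_inv upper_central_mult)
  moreover have "commutator G (commutator G a g) z = conjg G a T1"
    using a g zc by (simp add: T1_def conjg_def m_assoc)
  ultimately show ?thesis
    using a by (simp add: upper_central_conjg)
qed

lemma commutator_lower_upper_central:
  "a \<in> lower_central G (Suc i) \<Longrightarrow> z \<in> upper_central G (j + Suc i) \<Longrightarrow>
   commutator G a z \<in> upper_central G j"
proof (induction i arbitrary: j a z)
  case 0
  then have "inv (commutator G z a) \<in> upper_central G j"
    by (simp add: upper_central_inv)
  then show ?case
    using 0 by (simp add: inv_commutator upper_central_mem_carrier)
next
  case (Suc i)
  let ?S = "{a \<in> carrier G. \<forall>z \<in> upper_central G (j + Suc (Suc i)). commutator G a z \<in> upper_central G j}"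
  have "commutator G a g \<in> ?S" if a: "a \<in> lower_central G (Suc i)" and g: "g \<in> carrier G" for a g
  proof -
    have ac: "a \<in> carrier G"
      using a by (rule lower_central_mem_carrier)
    have "inv a \<in> lower_central G (Suc i)"
      using a subgroup.m_inv_closed[OF lower_central_subgroup] by blast
    then have "commutator G (commutator G a g) z \<in> upper_central G j"
      if "z \<in> upper_central G (Suc (j + Suc i))" for z
      using commutator_commutator_upper_central[OF ac g that] Suc.IH by blast
    then show ?thesis
      using ac g by auto
  qed
  then have "lower_central G (Suc (Suc i)) \<subseteq> ?S"
    unfolding lower_central.simps commutator_subgroup_def
    by (intro generate_subgroup_incl[OF _ commutator_left_subgroup]) (auto simp: commutator_def)
  then show ?case
    using Suc.prems by auto
qed

lemma commute_commutator_lower_central: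
  assumes top: "lower_central G (Suc c) = {\<one>}"
    and x: "x \<in> lower_central G ((c + 1) div 2)" and g: "g \<in> carrier G"
  shows "x \<otimes> commutator G x g = commutator G x g \<otimes> x"
proof (cases "(c + 1) div 2")
  case 0
  then have "c = 0"
    by presburger
  then have "carrier G = {\<one>}"
    using top by simp
  then have "x = \<one>" and "g = \<one>"
    using x g lower_central_mem_carrier by blast+
  then show ?thesis
    by simp
next
  case (Suc i)
  let ?k = "commutator G x g"
  have "?k \<in> lower_central G (Suc (c - (c - Suc i)))"
    using commutator_in_lower_central[of x i g] x g Suc by auto
  also have "\<dots> \<subseteq> upper_central G (c - Suc i)"
    using lower_central_subset_upper_central[OF top] by simp
  also have "\<dots> \<subseteq> upper_central G (0 + Suc i)"
    using Suc by (intro upper_central_mono) simp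
  finally have k: "?k \<in> upper_central G (0 + Suc i)" .
  have "commutator G x ?k \<in> upper_central G 0"
    using commutator_lower_upper_central[OF _ k] x Suc by simp
  then show ?thesis
    using x g lower_central_mem_carrier by (simp add: commutator_eq_one_iff)
qed

end

lemma nilpotency_class_lower_central:
  "nilpotent G \<Longrightarrow> lower_central G (Suc (nilpotency_class G)) = {\<one>\<^bsub>G\<^esub>}"
  unfolding nilpotent_def nilpotency_class_def by (metis (mono_tags, lifting) LeastI)

theorem lemma5p2:
  fixes G :: "('a, 'b) monoid_scheme"
  assumes "group G"
    and "finite (carrier G)"
    and "odd (order G)"
    and "nilpotent G"
    and "c = nilpotency_class G"
    and "n = (c + 1) div 2"
    and "x \<in> lower_central G n"
    and "g \<in> carrier G"
  shows "group.ord (tensor_square G) (tensor G x g) dvd exponent_of G (lower_central G n)"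
proof -
  interpret crossed_pairing G "tensor_square G" "tensor G"
    using assms(1) by (rule tensor_crossed_pairing)
  have x: "x \<in> carrier G"
    using assms(7) by (rule G.lower_central_mem_carrier)
  have "x \<otimes>\<^bsub>G\<^esub> commutator G x g = commutator G x g \<otimes>\<^bsub>G\<^esub> x"
    using G.commute_commutator_lower_central[OF nilpotency_class_lower_central[OF assms(4)]]
      assms(5-8) by blast
  moreover have "odd (G.ord x)"
    using G.ord_dvd_group_order[OF x] assms(3) dvd_trans by blast
  ultimately have "T.ord (tensor G x g) dvd G.ord x"
    using ord_pairing_dvd x assms(8) by blast
  also have "G.ord x dvd exponent_of G (lower_central G n)"
    unfolding exponent_of_def using assms(7) by (simp add: dvd_Lcm)
  finally show ?thesis .
qed

end
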